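(* If $b,c\ne 0$, then $\check{f}(x)$ has at most two roots. Furthermore, exactly one of the following statements is true. 1. $\check{f}$ has exactly two roots $x_0$ and $x_1$ at which it changes sign. The derivative $\check{f}'$ is nonzero at $x_0$ and $x_1$, and either $a<1,b<0,c>0$ or $a>1,b>0,c<0$. 2. $\check{f}$ has exactly one root $x_0$ at which it does not change sign. The derivative $\check{f}'$ also has a root at $x_0$, and either $a<1,b<0,c>0$ or $a>1,b>0,c<0$. 3. $\check{f}$ has exactly one root $x_0$ at which it changes sign. The derivative $\check{f}'$ is nonzero at $x_0$, and $bc>0$. 4. $\check{f}$ has no roots, and $bc<0$.
   Context: A function $f:\mathbb{R}^+\to\mathbb{R}^+$ is called strongly hyperbolic if: (1) $\lim_{x\to 0+} f(x)=+\infty$ and $\lim_{x\to+\infty} f(x)=0$; (2) $f$ is strictly convex; (3) for each $b\in\mathbb{R}$, $\lim_{x\to+\infty} f(x+b)/f(x)=1$; (4) $f$ is differentiable; (5) $\ln|f'(x)|$ is strictly convex. Let $f$ be a strongly hyperbolic function, let $a>0$, $b,c\in\mathbb{R}$, and define $\check{f}:(\max\{-b,0\},\infty)\to\mathbb{R}$ by $\check{f}(x)=af(x+b)+c-f(x)$. *)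

theory Defs
  imports "HOL-Analysis.Analysis"
begin

definition strictly_convex_on :: "real set \<Rightarrow> (real \<Rightarrow> real) \<Rightarrow> bool" where
  "strictly_convex_on S g \<longleftrightarrow> convex S \<and>
     (\<forall>x\<in>S. \<forall>y\<in>S. x \<noteq> y \<longrightarrow> (\<forall>t. 0 < t \<and> t < 1 \<longrightarrow>
        g ((1 - t) * x + t * y) < (1 - t) * g x + t * g y))"

definition strongly_hyperbolic :: "(real \<Rightarrow> real) \<Rightarrow> bool" where
  "strongly_hyperbolic f \<longleftrightarrow>
     (\<forall>x>0. f x > 0) \<and>
     filterlim f at_top (at_right 0) \<and>
     (f \<longlongrightarrow> 0) at_top \<and>
     strictly_convex_on {0<..} f \<and>
     (\<forall>b::real. ((\<lambda>x. f (x + b) / f x) \<longlongrightarrow> 1) at_top) \<and>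
     (\<forall>x>0. f differentiable (at x)) \<and>
     strictly_convex_on {0<..} (\<lambda>x. ln \<bar>deriv f x\<bar>)"

definition fcheck :: "(real \<Rightarrow> real) \<Rightarrow> real \<Rightarrow> real \<Rightarrow> real \<Rightarrow> real \<Rightarrow> real" where
  "fcheck f a b c x = a * f (x + b) + c - f x"

definition fcheck_dom :: "real \<Rightarrow> real set" where
  "fcheck_dom b = {max (- b) 0 <..}"

definition roots :: "(real \<Rightarrow> real) \<Rightarrow> real set \<Rightarrow> real set" where
  "roots g S = {x \<in> S. g x = 0}"

definition changes_sign_at :: "(real \<Rightarrow> real) \<Rightarrow> real \<Rightarrow> bool" where
  "changes_sign_at g x0 \<longleftrightarrow> (\<exists>e>0.
     ((\<forall>x\<in>{x0 - e<..<x0}. g x < 0) \<and> (\<forall>x\<in>{x0<..<x0 + e}. g x > 0)) \<or>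
     ((\<forall>x\<in>{x0 - e<..<x0}. g x > 0) \<and> (\<forall>x\<in>{x0<..<x0 + e}. g x < 0)))"

definition keeps_sign_at :: "(real \<Rightarrow> real) \<Rightarrow> real \<Rightarrow> bool" where
  "keeps_sign_at g x0 \<longleftrightarrow> (\<exists>e>0.
     (\<forall>x. 0 < \<bar>x - x0\<bar> \<and> \<bar>x - x0\<bar> < e \<longrightarrow> g x > 0) \<or>
     (\<forall>x. 0 < \<bar>x - x0\<bar> \<and> \<bar>x - x0\<bar> < e \<longrightarrow> g x < 0))"

definition exactly_one :: "bool list \<Rightarrow> bool" where
  "exactly_one ps \<longleftrightarrow> length (filter id ps) = 1"

end

(* Since f is convex and decreasing, f' < 0, so the derivative a f'(x+b) - f'(x) of fcheck has
   the sign of ln|f'(x)| - ln|f'(x+b)| - ln a, which is strictly monotone in x because ln|f'| is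
   strictly convex. Multiplied by sgn b, fcheck therefore tends to -infinity at the left end of its
   domain, tends to (sgn b) c at +infinity, and either increases throughout or increases up to a
   single critical point and decreases afterwards. Such a function has exactly one root, a sign
   change, if bc > 0; if bc < 0 it has no root, a double root at its maximum, or two sign changes,
   according to the sign of the maximum. A root with bc < 0 forces a < 1 (b < 0) or a > 1 (b > 0):
   otherwise comparing a f(x+b) with f(x) shows that fcheck has the sign of c everywhere. *)

theory Submission
  imports Defs
begin

lemma strictly_convex_on_imp_convex_on:
  assumes "strictly_convex_on S h"
  shows "convex_on S h"
proof
  show "convex S" using assms unfolding strictly_convex_on_def by blast
  fix t :: real and x y assume "0 < t" "t < 1" "x \<in> S" "y \<in> S"
  then show "h ((1 - t) *\<^sub>R x + t *\<^sub>R y) \<le> (1 - t) * h x + t * h y"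
  proof (cases "x = y")
    case True
    then show ?thesis by (simp add: algebra_simps flip: scaleR_add_left)
  next
    case False
    then show ?thesis
      using assms \<open>0 < t\<close> \<open>t < 1\<close> \<open>x \<in> S\<close> \<open>y \<in> S\<close>
      unfolding strictly_convex_on_def by (simp add: less_imp_le)
  qed
qed

lemma strictly_convex_on_increment_less:
  fixes h :: "real \<Rightarrow> real"
  assumes h: "strictly_convex_on S h" and "p \<in> S" "q + d \<in> S" "p < q" "0 < d"
  shows "h (p + d) - h p < h (q + d) - h q"
proof -
  \<comment> \<open>p + d and q are convex combinations of p and r with weights t and s, and t + s = 1.\<close>
  define r where "r = q + d"
  define t where "t = d / (r - p)"
  define s where "s = (q - p) / (r - p)"
  have rp: "r - p > 0" using assms by (simp add: r_def)
  have t: "0 < t" "t < 1" and s: "0 < s" "s < 1"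
    using assms rp by (simp_all add: t_def s_def r_def field_simps)
  have tr: "t * (r - p) = d" and sr: "s * (r - p) = q - p" using rp by (simp_all add: t_def s_def)
  then have "(t + s) * (r - p) = 1 * (r - p)" by (simp add: r_def algebra_simps)
  then have ts: "t + s = 1" using rp by (simp only: mult_cancel_right) simp
  from tr sr have pd: "(1 - t) * p + t * r = p + d" and q: "(1 - s) * p + s * r = q"
    by (simp_all add: algebra_simps)
  have "p \<noteq> r" using rp by simp
  then have "h (p + d) < (1 - t) * h p + t * h r" "h q < (1 - s) * h p + s * h r"
    using h t s \<open>p \<in> S\<close> \<open>q + d \<in> S\<close> pd q unfolding strictly_convex_on_def r_def by metis+
  then have "h (p + d) + h q < (2 - (t + s)) * h p + (t + s) * h r"
    by (simp add: algebra_simps)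
  then show ?thesis using ts by (simp add: r_def)
qed

lemma strict_mono_on_atLeast_less_limit:
  fixes g :: "real \<Rightarrow> real"
  assumes mono: "strict_mono_on {p..} g" and lim: "(g \<longlongrightarrow> c) at_top"
  shows "g p < c"
proof -
  have "eventually (\<lambda>y. g (p + 1) \<le> g y) at_top"
    using eventually_ge_at_top[of "p + 1"]
    by eventually_elim (auto intro: strict_mono_on_leD[OF mono])
  then have "g (p + 1) \<le> c" by (rule tendsto_lowerbound[OF lim]) simp
  moreover have "g p < g (p + 1)" by (auto intro: strict_mono_onD[OF mono])
  ultimately show ?thesis by simp
qed

lemma strict_antimono_on_atLeast_greater_limit:
  fixes g :: "real \<Rightarrow> real"
  assumes "strict_antimono_on {p..} g" and "(g \<longlongrightarrow> c) at_top"
  shows "c < g p"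
proof -
  have "strict_mono_on {p..} (\<lambda>x. - g x)" using assms(1) by (auto simp: monotone_on_def)
  moreover have "((\<lambda>x. - g x) \<longlongrightarrow> - c) at_top" using assms(2) by (rule tendsto_minus)
  ultimately show ?thesis using strict_mono_on_atLeast_less_limit by fastforce
qed

lemma changes_sign_at_if_strict_monotone:
  assumes "0 < e" "g x0 = 0"
    and "strict_mono_on {x0 - e<..<x0 + e} g \<or> strict_antimono_on {x0 - e<..<x0 + e} g"
  shows "changes_sign_at g x0"
  using assms unfolding changes_sign_at_def monotone_on_def
  by (intro exI[of _ e]) (elim disjE; force)

lemma keeps_sign_at_if_strict_max:
  assumes "0 < e" "g x0 = 0"
    and "strict_mono_on {x0 - e<..x0} g" "strict_antimono_on {x0..<x0 + e} g"
  shows "keeps_sign_at g x0"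
  unfolding keeps_sign_at_def
proof (intro exI[of _ e] conjI disjI2 allI impI)
  fix x assume "0 < \<bar>x - x0\<bar> \<and> \<bar>x - x0\<bar> < e"
  then consider "x0 - e < x" "x < x0" | "x0 < x" "x < x0 + e" by linarith
  then show "g x < 0"
  proof cases
    case 1
    then show ?thesis using strict_mono_onD[OF assms(3), of x x0] assms(1,2) by auto
  next
    case 2
    then show ?thesis using monotone_onD[OF assms(4), of x0 x] assms(1,2) by auto
  qed
qed fact

lemma changes_sign_at_cmult:
  "s \<noteq> 0 \<Longrightarrow> changes_sign_at (\<lambda>x. s * g x) x0 \<longleftrightarrow> changes_sign_at g x0"
  unfolding changes_sign_at_def
  by (cases "s > 0") (auto simp: zero_less_mult_iff mult_less_0_iff)

lemma keeps_sign_at_cmult: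
  "s \<noteq> 0 \<Longrightarrow> keeps_sign_at (\<lambda>x. s * g x) x0 \<longleftrightarrow> keeps_sign_at g x0"
  unfolding keeps_sign_at_def
  by (cases "s > 0") (auto simp: zero_less_mult_iff mult_less_0_iff)

lemma sgn_ln_diff:
  fixes u v :: real
  assumes "0 < u" "0 < v"
  shows "sgn (ln u - ln v) = sgn (u - v)"
  using assms by (cases u v rule: linorder_cases) auto

section \<open>Strongly hyperbolic functions\<close>

context
  fixes f :: "real \<Rightarrow> real"
  assumes sh: "strongly_hyperbolic f"
begin

lemma strongly_hyperbolic_pos: "0 < x \<Longrightarrow> 0 < f x"
  using sh unfolding strongly_hyperbolic_def by blast

lemma strongly_hyperbolic_has_deriv: "0 < x \<Longrightarrow> (f has_real_derivative deriv f x) (at x)"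
  using sh unfolding strongly_hyperbolic_def by (simp add: DERIV_deriv_iff_real_differentiable)

lemma strongly_hyperbolic_above_tangent:
  assumes "0 < x" "0 < y"
  shows "deriv f x * (y - x) \<le> f y - f x"
proof (rule convex_on_imp_above_tangent)
  show "convex_on {0<..} f"
    using sh strictly_convex_on_imp_convex_on unfolding strongly_hyperbolic_def by blast
  show "(f has_real_derivative deriv f x) (at x within {0<..})"
    using strongly_hyperbolic_has_deriv[OF assms(1)] by (rule has_field_derivative_at_within)
qed (use assms in \<open>auto simp: interior_open is_interval_connected is_interval_oi\<close>)

lemma strongly_hyperbolic_deriv_neg:
  assumes "0 < x"
  shows "deriv f x < 0"
proof (rule ccontr)
  assume "\<not> deriv f x < 0"
  then have ge: "f x \<le> f y" if "x < y" for y
    using strongly_hyperbolic_above_tangent[of x y] assms that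
    by (smt (verit) mult_nonneg_nonneg)
  have "(f \<longlongrightarrow> 0) at_top" using sh unfolding strongly_hyperbolic_def by blast
  then have "eventually (\<lambda>y. f y < f x) at_top"
    using strongly_hyperbolic_pos[OF assms] by (simp add: order_tendstoD(2))
  then have "eventually (\<lambda>y. f y < f x \<and> x < y) at_top"
    using eventually_gt_at_top[of x] by (rule eventually_conj)
  then obtain y where "f y < f x" "x < y"
    using eventually_happens'[OF trivial_limit_at_top_linorder] by blast
  with ge show False by force
qed

lemma strongly_hyperbolic_decreasing:
  assumes "0 < x" "x < y"
  shows "f y < f x"
  using strongly_hyperbolic_above_tangent[of y x] strongly_hyperbolic_deriv_neg[of y] assms
  by (smt (verit) mult_neg_neg)

lemma strongly_hyperbolic_continuous_ln_abs_deriv: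
  "continuous_on {0<..} (\<lambda>x. ln \<bar>deriv f x\<bar>)"
  by (intro convex_on_continuous strictly_convex_on_imp_convex_on)
    (use sh in \<open>auto simp: strongly_hyperbolic_def\<close>)

end

section \<open>Unimodal functions\<close>

lemma strict_antimono_on_imp_inj_on:
  fixes g :: "'a::linorder \<Rightarrow> 'b::preorder"
  assumes "strict_antimono_on S g"
  shows "inj_on g S"
proof (rule inj_onI, rule ccontr)
  fix x y assume "x \<in> S" "y \<in> S" "g x = g y" "x \<noteq> y"
  then show False
    using monotone_onD[OF assms, of x y] monotone_onD[OF assms, of y x]
    by (cases x y rule: linorder_cases) auto
qed

lemma unique_root_if_strict_antimono_on_atLeast:
  fixes g :: "real \<Rightarrow> real"
  assumes cont: "continuous_on {q..} g" and anti: "strict_antimono_on {q..} g"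
    and "0 < g q" and lim: "(g \<longlongrightarrow> c) at_top" and "c < 0"
  shows "\<exists>x1>q. {x. q \<le> x \<and> g x = 0} = {x1} \<and> changes_sign_at g x1"
proof -
  have "eventually (\<lambda>x. g x < 0 \<and> q < x) at_top"
    using order_tendstoD(2)[OF lim \<open>c < 0\<close>] eventually_gt_at_top[of q] by (rule eventually_conj)
  then obtain r where r: "q < r" "g r < 0"
    using eventually_happens'[OF trivial_limit_at_top_linorder] by blast
  then obtain x1 where x1: "q \<le> x1" "x1 \<le> r" "g x1 = 0"
    using IVT2'[of g r 0 q] \<open>0 < g q\<close> continuous_on_subset[OF cont] by fastforce
  have "q < x1" using x1 \<open>0 < g q\<close> by (cases "x1 = q") auto
  have roots: "{x. q \<le> x \<and> g x = 0} = {x1}"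
    using inj_onD[OF strict_antimono_on_imp_inj_on[OF anti]] x1 by auto
  have "changes_sign_at g x1"
    by (rule changes_sign_at_if_strict_monotone[of "x1 - q"])
      (use \<open>q < x1\<close> x1 in \<open>auto intro: monotone_on_subset[OF anti]\<close>)
  with roots \<open>q < x1\<close> show ?thesis by blast
qed

text \<open>Continuity of \<psi> is what rules out a sign change of g' without a critical point.\<close>

locale unimodal =
  fixes L :: real and g g' \<psi> :: "real \<Rightarrow> real"
  assumes has_deriv: "\<And>x. L < x \<Longrightarrow> (g has_real_derivative g' x) (at x)"
    and sgn_deriv: "\<And>x. L < x \<Longrightarrow> sgn (g' x) = sgn (\<psi> x)"
    and continuous_psi: "continuous_on {L<..} \<psi>"
    and strict_antimono_psi: "strict_antimono_on {L<..} \<psi>"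
    and at_bot_at_left_end: "filterlim g at_bot (at_right L)"
begin

lemma continuous: "continuous_on {L<..} g"
  using has_deriv by (meson DERIV_isCont continuous_at_imp_continuous_on greaterThan_iff)

lemma deriv_pos_iff: "L < x \<Longrightarrow> 0 < g' x \<longleftrightarrow> 0 < \<psi> x"
  using sgn_greater sgn_deriv by metis

lemma deriv_neg_iff: "L < x \<Longrightarrow> g' x < 0 \<longleftrightarrow> \<psi> x < 0"
  using sgn_less sgn_deriv by metis

lemma deriv_eq_0_iff: "L < x \<Longrightarrow> g' x = 0 \<longleftrightarrow> \<psi> x = 0"
  using sgn_0_0 sgn_deriv by metis

lemma exists_below:
  assumes "L < m"
  shows "\<exists>p. L < p \<and> p < m \<and> g p < y"
proof -
  have "eventually (\<lambda>x. g x < y) (at_right L)"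
    using at_bot_at_left_end by (simp add: filterlim_at_bot_dense)
  then obtain b where "L < b" "\<And>x. L < x \<Longrightarrow> x < b \<Longrightarrow> g x < y"
    unfolding eventually_at_right_field by blast
  then show ?thesis using assms by (intro exI[of _ "(L + min b m) / 2"]) auto
qed

lemma less_if_deriv_pos:
  assumes "L < x" "x < y" "\<And>z. x < z \<Longrightarrow> z < y \<Longrightarrow> 0 < g' z"
  shows "g x < g y"
proof (rule DERIV_pos_imp_increasing_open[OF assms(2)])
  fix z assume "x < z" "z < y"
  then show "\<exists>d. (g has_real_derivative d) (at z) \<and> 0 < d"
    using assms(1,3) has_deriv[of z] by (intro exI[of _ "g' z"]) auto
qed (use assms in \<open>auto intro: continuous_on_subset[OF continuous]\<close>)

lemma greater_if_deriv_neg: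
  assumes "L < x" "x < y" "\<And>z. x < z \<Longrightarrow> z < y \<Longrightarrow> g' z < 0"
  shows "g y < g x"
proof (rule DERIV_neg_imp_decreasing_open[OF assms(2)])
  fix z assume "x < z" "z < y"
  then show "\<exists>d. (g has_real_derivative d) (at z) \<and> d < 0"
    using assms(1,3) has_deriv[of z] by (intro exI[of _ "g' z"]) auto
qed (use assms in \<open>auto intro: continuous_on_subset[OF continuous]\<close>)

text \<open>Near L, g lies below g q, so by the mean value theorem g' > 0 somewhere left of q;
  if \<psi> q < 0, the intermediate value theorem would then give a zero of \<psi>.\<close>

lemma psi_pos_if_no_zero:
  assumes no_zero: "\<not> (\<exists>x>L. \<psi> x = 0)" and q: "L < q"
  shows "0 < \<psi> q"
proof (rule ccontr)
  assume "\<not> 0 < \<psi> q"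
  with no_zero q have "\<psi> q < 0" by force
  obtain p where p: "L < p" "p < q" "g p < g q" using exists_below[OF q] by blast
  have "\<exists>z. p < z \<and> z < q \<and> g q - g p = (q - p) * g' z"
    by (rule MVT2) (use p has_deriv in auto)
  then obtain z where z: "p < z" "z < q" "g q - g p = (q - p) * g' z" by blast
  then have "0 < g' z" using zero_less_mult_pos[of "q - p" "g' z"] p by simp
  then have "0 < \<psi> z" using deriv_pos_iff[of z] p z by simp
  have "\<exists>x. z \<le> x \<and> x \<le> q \<and> \<psi> x = 0"
    by (rule IVT2') (use \<open>\<psi> q < 0\<close> \<open>0 < \<psi> z\<close> p z in
        \<open>auto intro: continuous_on_subset[OF continuous_psi]\<close>)
  then show False using no_zero p z by fastforce
qed

lemma rising_or_peak:
  "(strict_mono_on {L<..} g \<and> (\<forall>x>L. g' x \<noteq> 0)) \<or>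
   (\<exists>xs>L. g' xs = 0 \<and> strict_mono_on {L<..xs} g \<and> strict_antimono_on {xs..} g \<and>
      (\<forall>x>L. x \<noteq> xs \<longrightarrow> g' x \<noteq> 0))"
proof (cases "\<exists>xs>L. \<psi> xs = 0")
  case True
  then obtain xs where xs: "L < xs" "\<psi> xs = 0" by blast
  have psi_less: "\<psi> y < \<psi> x" if "L < x" "x < y" for x y
    using monotone_onD[OF strict_antimono_psi] that by auto
  have pos: "0 < g' x" if "L < x" "x < xs" for x
    using psi_less[OF that] xs deriv_pos_iff[of x] that by simp
  have neg: "g' x < 0" if "xs < x" for x
    using psi_less[of xs x] xs deriv_neg_iff[of x] that by simp
  have "strict_mono_on {L<..xs} g"
    unfolding monotone_on_def by (auto intro!: less_if_deriv_pos pos)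
  moreover have "strict_antimono_on {xs..} g"
    unfolding monotone_on_def using xs by (auto intro!: greater_if_deriv_neg neg)
  moreover have "g' x \<noteq> 0" if "L < x" "x \<noteq> xs" for x
    using psi_less[of x xs] psi_less[of xs x] xs that
    by (cases x xs rule: linorder_cases) (auto simp: deriv_eq_0_iff)
  ultimately show ?thesis using xs deriv_eq_0_iff by blast
next
  case False
  then have pos: "0 < g' x" if "L < x" for x
    using psi_pos_if_no_zero deriv_pos_iff that by blast
  have "strict_mono_on {L<..} g"
    unfolding monotone_on_def by (auto intro!: less_if_deriv_pos pos)
  moreover have "g' x \<noteq> 0" if "L < x" for x
    using pos[OF that] by simp
  ultimately show ?thesis by blast
qed

lemma unique_root_if_strict_mono_on_left:
  assumes "L < q" and mono: "strict_mono_on {L<..q} g" and "0 < g q"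
  shows "\<exists>x0. L < x0 \<and> x0 < q \<and> {x. L < x \<and> x \<le> q \<and> g x = 0} = {x0} \<and> changes_sign_at g x0"
proof -
  obtain p where p: "L < p" "p < q" "g p < 0" using exists_below[OF \<open>L < q\<close>] by blast
  have "\<exists>x0. p \<le> x0 \<and> x0 \<le> q \<and> g x0 = 0"
    by (rule IVT') (use p \<open>0 < g q\<close> in \<open>auto intro: continuous_on_subset[OF continuous]\<close>)
  then obtain x0 where x0: "p \<le> x0" "x0 \<le> q" "g x0 = 0" by blast
  have "x0 < q" using x0 \<open>0 < g q\<close> by (cases "x0 = q") auto
  have roots: "{x. L < x \<and> x \<le> q \<and> g x = 0} = {x0}"
    using inj_onD[OF strict_mono_on_imp_inj_on[OF mono]] x0 p by auto
  have "changes_sign_at g x0"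
    by (rule changes_sign_at_if_strict_monotone[of "min (x0 - L) (q - x0)"])
      (use \<open>x0 < q\<close> x0 p in \<open>auto intro!: disjI1 monotone_on_subset[OF mono]\<close>)
  with roots \<open>x0 < q\<close> x0 p show ?thesis by auto
qed

lemma roots_if_limit_pos:
  assumes lim: "(g \<longlongrightarrow> c) at_top" and "0 < c"
  shows "\<exists>x0. {x. L < x \<and> g x = 0} = {x0} \<and> changes_sign_at g x0 \<and> g' x0 \<noteq> 0"
proof -
  obtain q where q: "L < q" "strict_mono_on {L<..q} g"
    and pos: "\<And>x. q \<le> x \<Longrightarrow> 0 < g x" and nz: "\<And>x. L < x \<Longrightarrow> x < q \<Longrightarrow> g' x \<noteq> 0"
    using rising_or_peak
  proof (elim disjE exE conjE)
    assume mono: "strict_mono_on {L<..} g" and "\<forall>x>L. g' x \<noteq> 0"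
    have "eventually (\<lambda>x. 0 < g x \<and> L < x) at_top"
      using order_tendstoD(1)[OF lim \<open>0 < c\<close>] eventually_gt_at_top[of L] by (rule eventually_conj)
    then obtain q where "0 < g q" "L < q"
      using eventually_happens'[OF trivial_limit_at_top_linorder] by blast
    moreover have "0 < g x" if "q \<le> x" for x
      using strict_mono_on_leD[OF mono, of q x] \<open>0 < g q\<close> \<open>L < q\<close> that by simp
    ultimately show thesis
      by (intro that[of q] monotone_on_subset[OF mono]) (use \<open>\<forall>x>L. g' x \<noteq> 0\<close> in auto)
  next
    fix xs assume "L < xs" "g' xs = 0" "strict_mono_on {L<..xs} g"
      and anti: "strict_antimono_on {xs..} g" and "\<forall>x>L. x \<noteq> xs \<longrightarrow> g' x \<noteq> 0"
    moreover have "0 < g x" if "xs \<le> x" for x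
      using strict_antimono_on_atLeast_greater_limit[OF monotone_on_subset[OF anti] lim] that \<open>0 < c\<close>
      by force
    ultimately show thesis using that[of xs] by auto
  qed
  obtain x0 where x0: "L < x0" "x0 < q" "{x. L < x \<and> x \<le> q \<and> g x = 0} = {x0}"
    and "changes_sign_at g x0"
    using unique_root_if_strict_mono_on_left[OF q pos[of q]] by auto
  moreover have "x \<le> q" if "g x = 0" for x
    using pos[of x] that by force
  then have "{x. L < x \<and> g x = 0} = {x. L < x \<and> x \<le> q \<and> g x = 0}" by auto
  ultimately show ?thesis using nz by auto
qed

lemma roots_if_peak_limit_neg:
  assumes xs: "L < xs" and mono: "strict_mono_on {L<..xs} g"
    and anti: "strict_antimono_on {xs..} g" and lim: "(g \<longlongrightarrow> c) at_top" and "c < 0"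
  shows "{x. L < x \<and> g x = 0} = {} \<or>
    ({x. L < x \<and> g x = 0} = {xs} \<and> keeps_sign_at g xs) \<or>
    (\<exists>x0 x1. x0 < xs \<and> xs < x1 \<and> {x. L < x \<and> g x = 0} = {x0, x1} \<and>
      changes_sign_at g x0 \<and> changes_sign_at g x1)"
proof -
  have below_peak: "g x < g xs" if "L < x" "x \<noteq> xs" for x
    using that xs monotone_onD[OF mono, of x xs] monotone_onD[OF anti, of xs x]
    by (cases x xs rule: linorder_cases) auto
  consider "g xs < 0" | "g xs = 0" | "0 < g xs" by linarith
  then show ?thesis
  proof cases
    case 1
    then have "g x \<noteq> 0" if "L < x" for x
      using below_peak[OF that] by (cases "x = xs") auto
    then show ?thesis by blast
  next
    case 2
    then have "g x \<noteq> 0" if "L < x" "x \<noteq> xs" for x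
      using below_peak[OF that] by simp
    then have "{x. L < x \<and> g x = 0} = {xs}" using xs 2 by blast
    moreover have "keeps_sign_at g xs"
      by (rule keeps_sign_at_if_strict_max[of "xs - L"])
        (use xs 2 in \<open>auto intro: monotone_on_subset[OF mono] monotone_on_subset[OF anti]\<close>)
    ultimately show ?thesis by blast
  next
    case 3
    have cont: "continuous_on {xs..} g"
      by (rule continuous_on_subset[OF continuous]) (use xs in auto)
    obtain x0 where x0: "L < x0" "x0 < xs" "{x. L < x \<and> x \<le> xs \<and> g x = 0} = {x0}"
      and "changes_sign_at g x0"
      using unique_root_if_strict_mono_on_left[OF xs mono 3] by auto
    moreover obtain x1 where "xs < x1" "{x. xs \<le> x \<and> g x = 0} = {x1}"
      and "changes_sign_at g x1"
      using unique_root_if_strict_antimono_on_atLeast[OF cont anti 3 lim \<open>c < 0\<close>] by blast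
    moreover have "{x. L < x \<and> g x = 0} =
        {x. L < x \<and> x \<le> xs \<and> g x = 0} \<union> {x. xs \<le> x \<and> g x = 0}"
      using xs by auto
    ultimately show ?thesis by auto
  qed
qed

lemma roots_if_limit_neg:
  assumes lim: "(g \<longlongrightarrow> c) at_top" and "c < 0"
  shows "{x. L < x \<and> g x = 0} = {} \<or>
    (\<exists>x0. {x. L < x \<and> g x = 0} = {x0} \<and> keeps_sign_at g x0 \<and> g' x0 = 0) \<or>
    (\<exists>x0 x1. x0 \<noteq> x1 \<and> {x. L < x \<and> g x = 0} = {x0, x1} \<and>
      changes_sign_at g x0 \<and> changes_sign_at g x1 \<and> g' x0 \<noteq> 0 \<and> g' x1 \<noteq> 0)"
  using rising_or_peak
proof (elim disjE exE conjE)
  assume mono: "strict_mono_on {L<..} g"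
  have "g x < c" if "L < x" for x
    using strict_mono_on_atLeast_less_limit[OF monotone_on_subset[OF mono] lim] that by force
  then have "{x. L < x \<and> g x = 0} = {}" using \<open>c < 0\<close> by force
  then show ?thesis by blast
next
  fix xs assume "L < xs" "g' xs = 0" "strict_mono_on {L<..xs} g" "strict_antimono_on {xs..} g"
    and nz: "\<forall>x>L. x \<noteq> xs \<longrightarrow> g' x \<noteq> 0"
  then have "{x. L < x \<and> g x = 0} = {} \<or>
    ({x. L < x \<and> g x = 0} = {xs} \<and> keeps_sign_at g xs) \<or>
    (\<exists>x0 x1. x0 < xs \<and> xs < x1 \<and> {x. L < x \<and> g x = 0} = {x0, x1} \<and>
      changes_sign_at g x0 \<and> changes_sign_at g x1)"
    using roots_if_peak_limit_neg lim \<open>c < 0\<close> by blast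
  then show ?thesis
  proof (elim disjE exE conjE)
    fix x0 x1 assume "x0 < xs" "xs < x1" "{x. L < x \<and> g x = 0} = {x0, x1}"
      "changes_sign_at g x0" "changes_sign_at g x1"
    moreover from this have "L < x0" by auto
    ultimately show ?thesis using nz \<open>L < xs\<close> by (intro disjI2 exI[of _ x0] exI[of _ x1]) auto
  qed (use \<open>g' xs = 0\<close> in auto)
qed

end

section \<open>Roots of fcheck\<close>

definition log_deriv_ratio :: "(real \<Rightarrow> real) \<Rightarrow> real \<Rightarrow> real \<Rightarrow> real \<Rightarrow> real" where
  "log_deriv_ratio f a b x = ln \<bar>deriv f x\<bar> - ln \<bar>deriv f (x + b)\<bar> - ln a"

context
  fixes f :: "real \<Rightarrow> real"
  assumes sh: "strongly_hyperbolic f"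
begin

lemma fcheck_has_real_derivative:
  assumes "max (- b) 0 < x"
  shows "(fcheck f a b c has_real_derivative a * deriv f (x + b) - deriv f x) (at x)"
proof -
  have x: "0 < x" "0 < x + b" using assms by auto
  have "((\<lambda>x. f (x + b)) has_real_derivative deriv f (x + b)) (at x)"
    using strongly_hyperbolic_has_deriv[OF sh x(2)] DERIV_shift by blast
  then have "((\<lambda>x. a * f (x + b) + c - f x) has_real_derivative
      a * deriv f (x + b) + 0 - deriv f x) (at x)"
    by (intro DERIV_diff DERIV_add DERIV_cmult DERIV_const strongly_hyperbolic_has_deriv[OF sh x(1)])
  then show ?thesis by (simp add: fcheck_def[abs_def])
qed

lemma deriv_fcheck:
  "max (- b) 0 < x \<Longrightarrow> deriv (fcheck f a b c) x = a * deriv f (x + b) - deriv f x"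
  using fcheck_has_real_derivative by (rule DERIV_imp_deriv)

lemma tendsto_fcheck_at_top: "(fcheck f a b c \<longlongrightarrow> c) at_top"
proof -
  have f0: "(f \<longlongrightarrow> 0) at_top" using sh unfolding strongly_hyperbolic_def by blast
  moreover have "filterlim (\<lambda>x. x + b) at_top at_top" by real_asymp
  ultimately have "((\<lambda>x. f (x + b)) \<longlongrightarrow> 0) at_top" by (rule filterlim_compose)
  then have "((\<lambda>x. a * f (x + b) + c - f x) \<longlongrightarrow> a * 0 + c - 0) at_top"
    by (intro tendsto_intros f0)
  then show ?thesis by (simp add: fcheck_def[abs_def])
qed

lemma filterlim_fcheck_at_bot_at_right_0:
  assumes "0 < b"
  shows "filterlim (fcheck f a b c) at_bot (at_right 0)"
proof -
  have "((\<lambda>x. f (x + b)) \<longlongrightarrow> f (0 + b)) (at_right 0)"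
    by (intro isCont_tendsto_compose[OF DERIV_isCont[OF strongly_hyperbolic_has_deriv[OF sh]]]
        tendsto_intros) (use assms in simp)
  then have "((\<lambda>x. a * f (x + b) + c) \<longlongrightarrow> a * f b + c) (at_right 0)"
    by (auto intro!: tendsto_intros)
  moreover have "filterlim (\<lambda>x. - f x) at_bot (at_right 0)"
    using sh unfolding strongly_hyperbolic_def filterlim_uminus_at_top by blast
  ultimately have "filterlim (\<lambda>x. (a * f (x + b) + c) + - f x) at_bot (at_right 0)"
    by (rule filterlim_tendsto_add_at_bot_iff[THEN iffD2])
  then show ?thesis by (simp add: fcheck_def[abs_def])
qed

lemma filterlim_fcheck_at_top_at_right:
  assumes a_pos: "0 < a" and "b < 0"
  shows "filterlim (fcheck f a b c) at_top (at_right (- b))"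
proof -
  have "isCont f (- b)"
    using DERIV_isCont[OF strongly_hyperbolic_has_deriv[OF sh]] assms by simp
  then have "(f \<longlongrightarrow> f (- b)) (at_right (- b))"
    unfolding isCont_def filterlim_at_split by blast
  then have "((\<lambda>x. c - f x) \<longlongrightarrow> c - f (- b)) (at_right (- b))"
    by (intro tendsto_intros)
  moreover have "filterlim (\<lambda>x. a * f (x + b)) at_top (at_right (- b))"
  proof -
    have "filterlim f at_top (at_right 0)" using sh unfolding strongly_hyperbolic_def by blast
    then have "filterlim (\<lambda>x. a * f x) at_top (at_right 0)"
      by (rule filterlim_tendsto_pos_mult_at_top[OF tendsto_const a_pos])
    then show ?thesis by (subst filterlim_at_right_to_0) simp
  qed
  moreover have "fcheck f a b c = (\<lambda>x. (c - f x) + a * f (x + b))"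
    by (auto simp: fcheck_def fun_eq_iff)
  ultimately show ?thesis
    using filterlim_tendsto_add_at_top by metis
qed

lemma sgn_fcheck_deriv:
  assumes a_pos: "0 < a" and "max (- b) 0 < x"
  shows "sgn (a * deriv f (x + b) - deriv f x) = sgn (log_deriv_ratio f a b x)"
proof -
  have neg: "deriv f x < 0" "deriv f (x + b) < 0"
    using strongly_hyperbolic_deriv_neg[OF sh] assms by simp_all
  then have u: "0 < \<bar>deriv f x\<bar>" and v: "0 < \<bar>deriv f (x + b)\<bar>" by simp_all
  have "log_deriv_ratio f a b x = ln \<bar>deriv f x\<bar> - ln (a * \<bar>deriv f (x + b)\<bar>)"
    using a_pos v by (simp add: log_deriv_ratio_def ln_mult)
  also have "sgn \<dots> = sgn (\<bar>deriv f x\<bar> - a * \<bar>deriv f (x + b)\<bar>)"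
    using a_pos u v by (intro sgn_ln_diff) simp_all
  also have "\<bar>deriv f x\<bar> - a * \<bar>deriv f (x + b)\<bar> = a * deriv f (x + b) - deriv f x"
    using neg by simp
  finally show ?thesis ..
qed

lemma strict_antimono_on_sgn_log_deriv_ratio:
  assumes "b \<noteq> 0"
  shows "strict_antimono_on {max (- b) 0<..}
    (\<lambda>x. sgn b * log_deriv_ratio f a b x)"
proof -
  let ?h = "\<lambda>x. ln \<bar>deriv f x\<bar>"
  have h: "strictly_convex_on {0<..} ?h" using sh unfolding strongly_hyperbolic_def by blast
  show ?thesis
    unfolding monotone_on_def log_deriv_ratio_def
  proof (intro ballI impI)
    fix x y assume "x \<in> {max (- b) 0<..}" "y \<in> {max (- b) 0<..}" "x < y"
    then have x: "0 < x" "0 < x + b" and "x < y" by auto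
    show "sgn b * (?h y - ?h (y + b) - ln a) < sgn b * (?h x - ?h (x + b) - ln a)"
    proof (cases "0 < b")
      case True
      then show ?thesis using strictly_convex_on_increment_less[OF h, of x y b] x \<open>x < y\<close> by simp
    next
      case False
      with assms have "b < 0" by simp
      then show ?thesis
        using strictly_convex_on_increment_less[OF h, of "x + b" "y + b" "- b"] x \<open>x < y\<close> by simp
    qed
  qed
qed

lemma continuous_on_sgn_log_deriv_ratio:
  "continuous_on {max (- b) 0<..}
    (\<lambda>x. sgn b * log_deriv_ratio f a b x)"
proof -
  have h: "continuous_on {0<..} (\<lambda>x. ln \<bar>deriv f x\<bar>)"
    by (rule strongly_hyperbolic_continuous_ln_abs_deriv[OF sh])
  have "continuous_on {max (- b) 0<..} (\<lambda>x. ln \<bar>deriv f (x + b)\<bar>)"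
    by (rule continuous_on_compose2[OF h]) (auto intro: continuous_intros)
  moreover have "continuous_on {max (- b) 0<..} (\<lambda>x. ln \<bar>deriv f x\<bar>)"
    by (rule continuous_on_subset[OF h]) auto
  ultimately show ?thesis
    unfolding log_deriv_ratio_def
    by (intro continuous_on_mult_left continuous_on_diff continuous_on_const)
qed

text \<open>The factor sgn b turns the case b < 0, where fcheck tends to +\<infinity> at the left end of its
  domain, into the case b > 0.\<close>

lemma unimodal_sgn_fcheck:
  assumes a_pos: "0 < a" and "b \<noteq> 0"
  shows "unimodal (max (- b) 0) (\<lambda>x. sgn b * fcheck f a b c x)
    (\<lambda>x. sgn b * deriv (fcheck f a b c) x)
    (\<lambda>x. sgn b * log_deriv_ratio f a b x)"
proof
  fix x assume x: "max (- b) 0 < x"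
  show "((\<lambda>x. sgn b * fcheck f a b c x) has_real_derivative
      sgn b * deriv (fcheck f a b c) x) (at x)"
    unfolding deriv_fcheck[OF x] by (rule DERIV_cmult[OF fcheck_has_real_derivative[OF x]])
  show "sgn (sgn b * deriv (fcheck f a b c) x) =
      sgn (sgn b * log_deriv_ratio f a b x)"
    using sgn_fcheck_deriv[OF a_pos x] by (simp add: deriv_fcheck[OF x] sgn_mult)
next
  show "filterlim (\<lambda>x. sgn b * fcheck f a b c x) at_bot (at_right (max (- b) 0))"
  proof (cases "0 < b")
    case True
    then show ?thesis using filterlim_fcheck_at_bot_at_right_0[OF True] by simp
  next
    case False
    with assms have "b < 0" by simp
    then show ?thesis
      using filterlim_fcheck_at_top_at_right[OF a_pos \<open>b < 0\<close>]
      by (simp add: filterlim_uminus_at_bot)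
  qed
qed (use assms(2) continuous_on_sgn_log_deriv_ratio strict_antimono_on_sgn_log_deriv_ratio in auto)

lemma fcheck_neg_if_pos_shift:
  assumes "0 < b" "a \<le> 1" "c < 0" "0 < x"
  shows "fcheck f a b c x < 0"
proof -
  have "a * f (x + b) \<le> f (x + b)"
    using assms strongly_hyperbolic_pos[OF sh, of "x + b"] by (simp add: mult_le_cancel_right1)
  also have "\<dots> < f x" using strongly_hyperbolic_decreasing[OF sh, of x "x + b"] assms by simp
  finally show ?thesis using \<open>c < 0\<close> by (simp add: fcheck_def)
qed

lemma fcheck_pos_if_neg_shift:
  assumes "b < 0" "1 \<le> a" "0 < c" "0 < x + b"
  shows "0 < fcheck f a b c x"
proof -
  have "f x < f (x + b)" using strongly_hyperbolic_decreasing[OF sh, of "x + b" x] assms by simp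
  also have "\<dots> \<le> a * f (x + b)"
    using assms strongly_hyperbolic_pos[OF sh, of "x + b"] by (simp add: mult_le_cancel_right1)
  finally show ?thesis using \<open>0 < c\<close> by (simp add: fcheck_def)
qed

end

lemma roots_fcheck_eq:
  "b \<noteq> 0 \<Longrightarrow>
    roots (fcheck f a b c) (fcheck_dom b) = {x. max (- b) 0 < x \<and> sgn b * fcheck f a b c x = 0}"
  by (auto simp: roots_def fcheck_dom_def sgn_0_0)

lemma sgn_mult_pos_iff: "0 < sgn b * c \<longleftrightarrow> 0 < b * (c :: real)"
  by (cases b "0 :: real" rule: linorder_cases) (auto simp: zero_less_mult_iff)

lemma fcheck_roots_if_same_sign:
  fixes f :: "real \<Rightarrow> real" and a b c :: real
  assumes sh: "strongly_hyperbolic f" and "0 < a" and "0 < b * c"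
  defines "g \<equiv> fcheck f a b c" and "Z \<equiv> roots (fcheck f a b c) (fcheck_dom b)"
  shows "\<exists>x0. Z = {x0} \<and> changes_sign_at g x0 \<and> deriv g x0 \<noteq> 0"
proof -
  have "b \<noteq> 0" using assms(3) by auto
  interpret unimodal "max (- b) 0" "\<lambda>x. sgn b * g x" "\<lambda>x. sgn b * deriv g x"
      "\<lambda>x. sgn b * log_deriv_ratio f a b x"
    unfolding g_def by (rule unimodal_sgn_fcheck[OF sh \<open>0 < a\<close> \<open>b \<noteq> 0\<close>])
  have lim: "((\<lambda>x. sgn b * g x) \<longlongrightarrow> sgn b * c) at_top"
    unfolding g_def by (intro tendsto_mult_left tendsto_fcheck_at_top[OF sh])
  have "0 < sgn b * c" using assms(3) by (simp add: sgn_mult_pos_iff)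
  then show ?thesis
    using roots_if_limit_pos[OF lim] \<open>b \<noteq> 0\<close>
    by (simp add: Z_def g_def roots_fcheck_eq changes_sign_at_cmult sgn_0_0)
qed

lemma fcheck_roots_if_opposite_sign:
  fixes f :: "real \<Rightarrow> real" and a b c :: real
  assumes sh: "strongly_hyperbolic f" and "0 < a" and "b * c < 0"
  defines "g \<equiv> fcheck f a b c" and "Z \<equiv> roots (fcheck f a b c) (fcheck_dom b)"
  shows "Z = {} \<or> (\<exists>x0. Z = {x0} \<and> keeps_sign_at g x0 \<and> deriv g x0 = 0) \<or>
    (\<exists>x0 x1. x0 \<noteq> x1 \<and> Z = {x0, x1} \<and> changes_sign_at g x0 \<and> changes_sign_at g x1 \<and>
      deriv g x0 \<noteq> 0 \<and> deriv g x1 \<noteq> 0)"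
proof -
  have "b \<noteq> 0" using assms(3) by auto
  interpret unimodal "max (- b) 0" "\<lambda>x. sgn b * g x" "\<lambda>x. sgn b * deriv g x"
      "\<lambda>x. sgn b * log_deriv_ratio f a b x"
    unfolding g_def by (rule unimodal_sgn_fcheck[OF sh \<open>0 < a\<close> \<open>b \<noteq> 0\<close>])
  have lim: "((\<lambda>x. sgn b * g x) \<longlongrightarrow> sgn b * c) at_top"
    unfolding g_def by (intro tendsto_mult_left tendsto_fcheck_at_top[OF sh])
  have "sgn b * c < 0" using assms(3) sgn_mult_pos_iff[of "- b" c] by simp
  then show ?thesis
    using roots_if_limit_neg[OF lim] \<open>b \<noteq> 0\<close>
    by (simp add: Z_def g_def roots_fcheck_eq changes_sign_at_cmult keeps_sign_at_cmult sgn_0_0)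
qed

lemma fcheck_root_imp_parameter_signs:
  fixes f :: "real \<Rightarrow> real" and a b c :: real
  assumes sh: "strongly_hyperbolic f" and "b * c < 0"
    and "roots (fcheck f a b c) (fcheck_dom b) \<noteq> {}"
  shows "(a < 1 \<and> b < 0 \<and> c > 0) \<or> (a > 1 \<and> b > 0 \<and> c < 0)"
proof -
  obtain x where x: "max (- b) 0 < x" "fcheck f a b c x = 0"
    using assms(3) by (auto simp: roots_def fcheck_dom_def)
  consider "0 < b" "c < 0" | "b < 0" "0 < c" using assms(2) by (auto simp: mult_less_0_iff)
  then show ?thesis
  proof cases
    case 1
    then show ?thesis using fcheck_neg_if_pos_shift[OF sh, of b a c x] x by force
  next
    case 2
    then show ?thesis using fcheck_pos_if_neg_shift[OF sh, of b a c x] x by force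
  qed
qed

theorem lemma3p5:
  fixes f :: "real \<Rightarrow> real" and a b c :: real
  assumes "strongly_hyperbolic f" and "a > 0" and "b \<noteq> 0" and "c \<noteq> 0"
  defines "g \<equiv> fcheck f a b c" and "Z \<equiv> roots (fcheck f a b c) (fcheck_dom b)"
  shows "finite Z \<and> card Z \<le> 2 \<and>
    exactly_one
     [ (\<exists>x0 x1. x0 \<noteq> x1 \<and> Z = {x0, x1} \<and>
          changes_sign_at g x0 \<and> changes_sign_at g x1 \<and>
          deriv g x0 \<noteq> 0 \<and> deriv g x1 \<noteq> 0 \<and>
          ((a < 1 \<and> b < 0 \<and> c > 0) \<or> (a > 1 \<and> b > 0 \<and> c < 0))),
       (\<exists>x0. Z = {x0} \<and> keeps_sign_at g x0 \<and> deriv g x0 = 0 \<and>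
          ((a < 1 \<and> b < 0 \<and> c > 0) \<or> (a > 1 \<and> b > 0 \<and> c < 0))),
       (\<exists>x0. Z = {x0} \<and> changes_sign_at g x0 \<and> deriv g x0 \<noteq> 0 \<and> b * c > 0),
       (Z = {} \<and> b * c < 0) ]"
proof (cases "0 < b * c")
  case True
  then obtain x0 where "Z = {x0}" "changes_sign_at g x0" "deriv g x0 \<noteq> 0"
    using fcheck_roots_if_same_sign[OF assms(1,2)] unfolding g_def Z_def by blast
  then show ?thesis using True by (auto simp: exactly_one_def zero_less_mult_iff)
next
  case False
  with assms(3,4) have bc: "b * c < 0" by (simp add: linorder_not_less le_less)
  have "Z \<noteq> {} \<Longrightarrow> (a < 1 \<and> b < 0 \<and> c > 0) \<or> (a > 1 \<and> b > 0 \<and> c < 0)"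
    using fcheck_root_imp_parameter_signs[OF assms(1) bc] unfolding Z_def by blast
  with fcheck_roots_if_opposite_sign[OF assms(1,2) bc, folded Z_def, folded g_def] bc
  show ?thesis by (elim disjE exE conjE) (auto simp: exactly_one_def)
qed

end
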